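(* Consider a chemical reaction network satisfying hypotheses (H1) and (H2) below, and let \[ Y+S_0\rightleftarrows U_1 \rightarrow Y+S_1\rightleftarrows U_2 \rightarrow \cdots \rightarrow Y+S_{L-1}\rightleftarrows U_L \rightarrow Y+S_L \] be one of its connected components ($L\ge 1$), with rate constants $a_j,b_j,c_j$ ($1\le j\le L$) as described in the context. Then all the constants $a_1,\dots,a_L,b_1,\dots,b_L,c_1,\dots,c_L$ of this component are identifiable from the single variable $s_L$ using the total derivatives $s_L^{(\ell)}$ with $1\le \ell\le \max\{2,2L-1\}$.
   Context: Species are denoted by capital letters and their concentrations by the corresponding lower-case letters. A chemical reaction network is a finite directed graph whose vertices (complexes) are nonnegative integer combinations of species (identified with vectors $y\in\mathbb{Z}_{\ge0}^s$) and whose edges $y\to y'$ (reactions) carry rate constants $k_{yy'}>0$; $\mathbf{k}$ denotes the vector of all rate constants. Under mass-action kinetics the concentrations $\mathbf{x}=(x_1,\dots,x_s)$ satisfy $\dot{\mathbf{x}}=\sum_{y\to y'}k_{yy'}\mathbf{x}^y(y'-y)$, with $\mathbf{x}^y=\prod_i x_i^{y_i}$. For a polynomial $\varphi(\mathbf{x})$, its total derivative is $\dot\varphi=\sum_i \frac{\partial\varphi}{\partial x_i}\dot x_i$, with $\dot x_i$ replaced by the right-hand side of the system; $\varphi^{(\ell)}$ is the $\ell$-th iterate ($\varphi^{(1)}=\dot\varphi$). Each $\varphi^{(\ell)}$ is a polynomial in the concentration variables with coefficients that are polynomials in $\mathbf{k}$. Identifiability: a map $\psi$ defined on $\mathbb{R}_{>0}^{\#\text{reactions}}$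 (e.g. a list of rate constants) is identifiable from variables $x_{i_1},\dots,x_{i_t}$ using derivatives of orders $1\le\ell\le D$ if for all $\mathbf{k}^*,\mathbf{k}^{**}\in\mathbb{R}_{>0}^{\#\text{reactions}}$, the equalities $x_{i_j}^{(\ell)}(\mathbf{x},\mathbf{k}^* )=x_{i_j}^{(\ell)}(\mathbf{x},\mathbf{k}^{**})$ as polynomials in $\mathbf{x}$ for all $1\le\ell\le D$, $1\le j\le t$ imply $\psi(\mathbf{k}^* )=\psi(\mathbf{k}^{**})$. Hypotheses. (H1) Every connected component of the network has the form $Y+S_0\rightleftarrows U_1\to Y+S_1\rightleftarrows\cdots\rightleftarrows U_L\to Y+S_L$, meaning the reactions $Y+S_{j-1}\to U_j$ (rate $a_j$), $U_j\to Y+S_{j-1}$ (rate $b_j$), $U_j\to Y+S_j$ (rate $c_j$), $1\le j\le L$; $Y$ is the unique enzyme of the component, the $U_j$ are intermediate species; intermediate species are all distinct throughout the whole network (each participates only in its three reactions); the non-intermediate species $S_0,\dots,S_L$ of a component are pairwise distinct but may appear (in any role, including as enzymes) in other components; each complex lies in a unique connected component. For an intermediate $U$, $\mathscr{S}_U$ denotes the set of substrates/products ($S_0,\dots,S_L$) of the component containing $U$. (H2) The set of species admits a partition $\mathscr{S}^{(0)}\sqcup\mathscr{S}^{(1)}\sqcup\cdots\sqcup\mathscr{S}^{(M)}$, $M\ge2$, into nonempty sets, where $\mathscr{S}^{(0)}$ is the set of intermediate species, such that for each intermediate $U$ whose component has enzyme $Y$ there is $\alpha\ge1$ with $\mathscr{S}_U\subseteq\mathscr{S}^{(\alpha)}$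 and $Y\notin\mathscr{S}^{(\alpha)}$. *)

theory Defs
  imports "HOL-Analysis.Analysis"
begin

text \<open>A reaction is a pair
  (source complex, target complex); a network is a finite set of reactions;
  rate constants are a function k on reactions (only values on the network matter).\<close>

type_synonym 'sp cplx = "'sp \<Rightarrow> nat"
type_synonym 'sp reaction = "'sp cplx \<times> 'sp cplx"

definition cunit :: "'sp \<Rightarrow> 'sp cplx" where
  "cunit A = (\<lambda>i. if i = A then 1 else 0)"

definition cplus :: "'sp cplx \<Rightarrow> 'sp cplx \<Rightarrow> 'sp cplx" where
  "cplus y z = (\<lambda>i. y i + z i)"

definition monom_x :: "'sp cplx \<Rightarrow> real ^ 'sp::finite \<Rightarrow> real" where
  "monom_x y x = (\<Prod>i\<in>UNIV. (x $ i) ^ (y i))"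

definition mass_action :: "('sp::finite) reaction set \<Rightarrow> ('sp reaction \<Rightarrow> real) \<Rightarrow> real ^ 'sp \<Rightarrow> real ^ 'sp" where
  "mass_action R k x = (\<Sum>r\<in>R. (k r * monom_x (fst r) x) *\<^sub>R (\<chi> i. real (snd r i) - real (fst r i)))"

definition pderiv_x :: "'sp::finite \<Rightarrow> (real ^ 'sp \<Rightarrow> real) \<Rightarrow> real ^ 'sp \<Rightarrow> real" where
  "pderiv_x i \<phi> x = deriv (\<lambda>t. \<phi> (x + t *\<^sub>R axis i 1)) 0"

definition total_deriv :: "('sp::finite) reaction set \<Rightarrow> ('sp reaction \<Rightarrow> real) \<Rightarrow> (real ^ 'sp \<Rightarrow> real) \<Rightarrow> real ^ 'sp \<Rightarrow> real" where
  "total_deriv R k \<phi> = (\<lambda>x. \<Sum>i\<in>UNIV. pderiv_x i \<phi> x * (mass_action R k x $ i))"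

definition total_deriv_iter :: "('sp::finite) reaction set \<Rightarrow> ('sp reaction \<Rightarrow> real) \<Rightarrow> nat \<Rightarrow> (real ^ 'sp \<Rightarrow> real) \<Rightarrow> real ^ 'sp \<Rightarrow> real" where
  "total_deriv_iter R k l \<phi> = (total_deriv R k ^^ l) \<phi>"

definition identifiable :: "('sp::finite) reaction set \<Rightarrow> (('sp reaction \<Rightarrow> real) \<Rightarrow> 'b) \<Rightarrow> 'sp set \<Rightarrow> nat \<Rightarrow> bool" where
  "identifiable R \<psi> obs D \<longleftrightarrow>
     (\<forall>k1 k2. (\<forall>r\<in>R. k1 r > 0) \<and> (\<forall>r\<in>R. k2 r > 0) \<and>
        (\<forall>l\<in>{1..D}. \<forall>i\<in>obs. total_deriv_iter R k1 l (\<lambda>x. x $ i) = total_deriv_iter R k2 l (\<lambda>x. x $ i))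
        \<longrightarrow> \<psi> k1 = \<psi> k2)"

text \<open>Reactions of a component Y+S_0 <=> U_1 -> Y+S_1 <=> ... <=> U_L -> Y+S_L.\<close>
definition rA :: "'sp \<Rightarrow> (nat \<Rightarrow> 'sp) \<Rightarrow> (nat \<Rightarrow> 'sp) \<Rightarrow> nat \<Rightarrow> 'sp reaction" where
  "rA Y S U j = (cplus (cunit Y) (cunit (S (j - 1))), cunit (U j))"
definition rB :: "'sp \<Rightarrow> (nat \<Rightarrow> 'sp) \<Rightarrow> (nat \<Rightarrow> 'sp) \<Rightarrow> nat \<Rightarrow> 'sp reaction" where
  "rB Y S U j = (cunit (U j), cplus (cunit Y) (cunit (S (j - 1))))"
definition rC :: "'sp \<Rightarrow> (nat \<Rightarrow> 'sp) \<Rightarrow> (nat \<Rightarrow> 'sp) \<Rightarrow> nat \<Rightarrow> 'sp reaction" where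
  "rC Y S U j = (cunit (U j), cplus (cunit Y) (cunit (S j)))"

definition chain_reactions :: "'sp \<Rightarrow> (nat \<Rightarrow> 'sp) \<Rightarrow> (nat \<Rightarrow> 'sp) \<Rightarrow> nat \<Rightarrow> 'sp reaction set" where
  "chain_reactions Y S U L = (\<Union>j\<in>{1..L}. {rA Y S U j, rB Y S U j, rC Y S U j})"

definition species_of :: "'sp reaction set \<Rightarrow> 'sp set" where
  "species_of R = {s. \<exists>r\<in>R. fst r s > 0 \<or> snd r s > 0}"

text \<open>Hypothesis (H1): the network R is the disjoint union of the components indexed by I,
  component c being Y c + S c 0 <=> U c 1 -> ... <=> U c (L c) -> Y c + S c (L c).\<close>
definition H1 :: "('sp::finite) reaction set \<Rightarrow> 'c set \<Rightarrow> ('c \<Rightarrow> nat) \<Rightarrow> ('c \<Rightarrow> 'sp) \<Rightarrow>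
    ('c \<Rightarrow> nat \<Rightarrow> 'sp) \<Rightarrow> ('c \<Rightarrow> nat \<Rightarrow> 'sp) \<Rightarrow> bool" where
  "H1 R I L Y S U \<longleftrightarrow>
     finite I \<and>
     (\<forall>c\<in>I. L c \<ge> 1) \<and>
     R = (\<Union>c\<in>I. chain_reactions (Y c) (S c) (U c) (L c)) \<and>
     \<comment> \<open>intermediate species are all distinct throughout the network\<close>
     inj_on (\<lambda>(c, j). U c j) {(c, j). c \<in> I \<and> j \<in> {1..L c}} \<and>
     \<comment> \<open>intermediates are not enzymes or substrates/products anywhere\<close>
     (\<forall>c\<in>I. \<forall>j\<in>{1..L c}. \<forall>c'\<in>I. U c j \<noteq> Y c' \<and> (\<forall>j'\<in>{0..L c'}. U c j \<noteq> S c' j')) \<and>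
     \<comment> \<open>substrates/products of a component are pairwise distinct\<close>
     (\<forall>c\<in>I. inj_on (S c) {0..L c}) \<and>
     \<comment> \<open>each complex lies in a unique connected component\<close>
     (\<forall>c\<in>I. \<forall>c'\<in>I. c \<noteq> c' \<longrightarrow> (\<forall>j\<in>{0..L c}. \<forall>j'\<in>{0..L c'}.
        cplus (cunit (Y c)) (cunit (S c j)) \<noteq> cplus (cunit (Y c')) (cunit (S c' j'))))"

text \<open>Hypothesis (H2): partition of the species into classes 0..M (M >= 2), class 0 being the
  intermediates, given by a class-index function P.\<close>
definition H2 :: "('sp::finite) reaction set \<Rightarrow> 'c set \<Rightarrow> ('c \<Rightarrow> nat) \<Rightarrow> ('c \<Rightarrow> 'sp) \<Rightarrow>
    ('c \<Rightarrow> nat \<Rightarrow> 'sp) \<Rightarrow> ('c \<Rightarrow> nat \<Rightarrow> 'sp) \<Rightarrow> bool" where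
  "H2 R I L Y S U \<longleftrightarrow>
     (\<exists>M::nat. \<exists>P :: 'sp \<Rightarrow> nat. M \<ge> 2 \<and>
        (\<forall>s\<in>species_of R. P s \<le> M) \<and>
        (\<forall>\<alpha>\<le>M. \<exists>s\<in>species_of R. P s = \<alpha>) \<and>
        (\<forall>s\<in>species_of R. P s = 0 \<longleftrightarrow> (\<exists>c\<in>I. \<exists>j\<in>{1..L c}. s = U c j)) \<and>
        (\<forall>c\<in>I. \<exists>\<alpha>\<ge>1. (\<forall>j\<in>{0..L c}. P (S c j) = \<alpha>) \<and> P (Y c) \<noteq> \<alpha>))"

end

theory Submission
  imports Defs
begin

(* The derivatives s_L^(l) are polynomials; we handle them through their coefficient functions,
   which are determined by the polynomial functions (iterated partial derivatives at 0).
   By (H1) and (H2) every reaction outside the component consumes a species outside it, so the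
   coefficients of monomials in the component's own species only depend on the component.
   Inside the component, give S_j the weight 2(L - j) and U_j the weight 2(L - j) + 1, the number
   of steps from that species to S_L. Among the monomials linear in the non-enzyme species,
   s_L^(l) contains exactly one of weighted degree l, and its coefficient is the product
   c_L a_L c_(L-1) a_(L-1) ... of the first l rate constants met going back along the chain.
   For l <= max 2 (2L - 1) these products identify every c_j and every a_j except a_1 (when L >= 2);
   a_1 and the b_j are read off explicit coefficients of the second and third derivatives. *)

section \<open>Polynomials as coefficient functions\<close>

definition cdec :: "'sp cplx \<Rightarrow> 'sp \<Rightarrow> 'sp cplx" where
  "cdec m i = m(i := m i - 1)"

lemma cplus_commute: "cplus a b = cplus b a"
  by (simp add: cplus_def fun_eq_iff)

lemma cplus_assoc: "cplus (cplus a b) c = cplus a (cplus b c)"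
  by (simp add: cplus_def fun_eq_iff)

lemma cplus_left_cancel: "cplus a b = cplus a c \<longleftrightarrow> b = c"
  by (simp add: cplus_def fun_eq_iff)

lemma cplus_apply: "cplus a b x = a x + b x"
  by (simp add: cplus_def)

lemma cunit_apply: "cunit a x = (if x = a then 1 else 0)"
  by (simp add: cunit_def)

lemma cunit_eq_iff: "cunit a = cunit b \<longleftrightarrow> a = b"
  by (metis cunit_def one_neq_zero)

lemma cunit_pos_iff: "0 < cunit x i \<longleftrightarrow> i = x"
  by (simp add: cunit_def)

lemma cdec_cunit: "cdec (cunit x) x = (\<lambda>_. 0)"
  by (simp add: cdec_def cunit_def fun_eq_iff)

lemma cplus_zero_left: "cplus (\<lambda>_. 0) b = b"
  by (simp add: cplus_def)

lemma cdec_cplus_cunit_left: "cdec (cplus (cunit x) b) x = b"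
  by (simp add: cdec_def cplus_def cunit_def fun_eq_iff)

lemma cplus_cdec_cunit: "0 < m i \<Longrightarrow> cplus (cdec m i) (cunit i) = m"
  by (intro ext) (auto simp: cplus_def cdec_def cunit_def)

definition coeff_supp :: "('sp cplx \<Rightarrow> real) \<Rightarrow> 'sp cplx set" where
  "coeff_supp p = {m. p m \<noteq> 0}"

definition eval_coeffs :: "('sp cplx \<Rightarrow> real) \<Rightarrow> real ^ 'sp::finite \<Rightarrow> real" where
  "eval_coeffs p x = (\<Sum>m\<in>coeff_supp p. p m * monom_x m x)"

definition var_coeffs :: "'sp \<Rightarrow> 'sp cplx \<Rightarrow> real" where
  "var_coeffs i m = (if m = cunit i then 1 else 0)"

definition net_change :: "'sp reaction \<Rightarrow> 'sp \<Rightarrow> real" where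
  "net_change r i = real (snd r i) - real (fst r i)"

text \<open>Differentiating the term \<open>p m x\<^sup>m\<close> along reaction \<open>r\<close> through the variable \<open>x\<^sub>i\<close>
  produces a multiple of the monomial \<open>cplus (cdec m i) (fst r)\<close>.\<close>
definition contributions ::
    "'sp reaction set \<Rightarrow> ('sp cplx \<Rightarrow> real) \<Rightarrow> 'sp cplx \<Rightarrow> ('sp cplx \<times> 'sp \<times> 'sp reaction) set" where
  "contributions R p m' = {(m, i, r). p m \<noteq> 0 \<and> 0 < m i \<and> r \<in> R \<and> net_change r i \<noteq> 0 \<and>
                                       m' = cplus (cdec m i) (fst r)}"

definition contribution ::
    "('sp reaction \<Rightarrow> real) \<Rightarrow> ('sp cplx \<Rightarrow> real) \<Rightarrow> 'sp cplx \<times> 'sp \<times> 'sp reaction \<Rightarrow> real" where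
  "contribution k p t = (case t of (m, i, r) \<Rightarrow> p m * real (m i) * k r * net_change r i)"

definition total_deriv_coeffs ::
    "('sp::finite) reaction set \<Rightarrow> ('sp reaction \<Rightarrow> real) \<Rightarrow> ('sp cplx \<Rightarrow> real) \<Rightarrow> 'sp cplx \<Rightarrow> real" where
  "total_deriv_coeffs R k p m' = (\<Sum>t\<in>contributions R p m'. contribution k p t)"

lemma contributionsE:
  assumes "t \<in> contributions R p m'"
  obtains m i r where "t = (m, i, r)" "p m \<noteq> 0" "0 < m i" "r \<in> R" "net_change r i \<noteq> 0"
    "m' = cplus (cdec m i) (fst r)"
  using assms unfolding contributions_def by blast

lemma contributions_nonempty:
  "total_deriv_coeffs R k p m' \<noteq> 0 \<Longrightarrow> contributions R p m' \<noteq> {}"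
  unfolding total_deriv_coeffs_def by auto

lemma eval_coeffs_superset:
  assumes "finite A" "coeff_supp p \<subseteq> A"
  shows "eval_coeffs p x = (\<Sum>m\<in>A. p m * monom_x m x)"
  unfolding eval_coeffs_def
  by (rule sum.mono_neutral_left) (use assms in \<open>auto simp: coeff_supp_def\<close>)

lemma monom_x_cplus: "monom_x (cplus a b) x = monom_x a x * monom_x b x"
  unfolding monom_x_def cplus_def by (simp add: power_add prod.distrib)

lemma monom_x_cunit: "monom_x (cunit i) x = x $ i"
  unfolding monom_x_def cunit_def by (simp add: if_distrib cong: if_cong)

lemma has_real_derivative_monom_x:
  "((\<lambda>t. monom_x m (x + t *\<^sub>R axis i 1)) has_real_derivative real (m i) * monom_x (cdec m i) x) (at 0)"
proof -
  define C where "C = (\<Prod>j\<in>UNIV - {i}. (x $ j) ^ m j)"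
  have eq: "monom_x m (x + t *\<^sub>R axis i 1) = (x $ i + t) ^ m i * C" for t
    unfolding monom_x_def C_def by (simp add: prod.remove[of UNIV i] axis_def)
  have "monom_x (cdec m i) x = (x $ i) ^ (m i - 1) * C"
    unfolding monom_x_def cdec_def C_def by (simp add: prod.remove[of UNIV i])
  moreover have "((\<lambda>t. (x $ i + t) ^ m i * C) has_real_derivative
      (real (m i) * (x $ i + 0) ^ (m i - 1) * 1) * C) (at 0)"
    by (intro derivative_eq_intros) auto
  ultimately show ?thesis unfolding eq by (simp add: mult.assoc)
qed

lemma pderiv_x_eval_coeffs:
  assumes "finite (coeff_supp p)"
  shows "pderiv_x i (eval_coeffs p) x = (\<Sum>m\<in>coeff_supp p. p m * (real (m i) * monom_x (cdec m i) x))"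
  unfolding pderiv_x_def eval_coeffs_def
  by (intro DERIV_imp_deriv DERIV_sum DERIV_cmult has_real_derivative_monom_x)

lemma mass_action_component:
  "mass_action R k x $ i = (\<Sum>r\<in>R. k r * monom_x (fst r) x * net_change r i)"
  unfolding mass_action_def sum_component net_change_def by simp

lemma coeff_supp_total_deriv_coeffs:
  "coeff_supp (total_deriv_coeffs R k p) \<subseteq>
     (\<lambda>(m, i, r). cplus (cdec m i) (fst r)) ` (coeff_supp p \<times> UNIV \<times> R)"
proof
  fix m' assume "m' \<in> coeff_supp (total_deriv_coeffs R k p)"
  then obtain t where "t \<in> contributions R p m'"
    using contributions_nonempty by (force simp: coeff_supp_def)
  then show "m' \<in> (\<lambda>(m, i, r). cplus (cdec m i) (fst r)) ` (coeff_supp p \<times> UNIV \<times> R)"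
    by (elim contributionsE) (force simp: coeff_supp_def)
qed

lemma finite_coeff_supp_total_deriv_coeffs:
  fixes R :: "('sp::finite) reaction set"
  shows "finite R \<Longrightarrow> finite (coeff_supp p) \<Longrightarrow> finite (coeff_supp (total_deriv_coeffs R k p))"
  by (rule finite_subset[OF coeff_supp_total_deriv_coeffs]) auto

lemma total_deriv_eval_coeffs:
  fixes R :: "('sp::finite) reaction set"
  assumes R: "finite R" and p: "finite (coeff_supp p)"
  shows "total_deriv R k (eval_coeffs p) = eval_coeffs (total_deriv_coeffs R k p)"
proof
  fix x :: "real ^ 'sp"
  define target :: "'sp cplx \<times> 'sp \<times> 'sp reaction \<Rightarrow> 'sp cplx" where "target = (\<lambda>(m, i, r). cplus (cdec m i) (fst r))"
  define A where "A = {(m, i, r) \<in> coeff_supp p \<times> UNIV \<times> R. 0 < m i \<and> net_change r i \<noteq> 0}"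
  define g where "g t = contribution k p t * monom_x (target t) x" for t
  define F where "F m i r = p m * (real (m i) * monom_x (cdec m i) x) * (k r * monom_x (fst r) x * net_change r i)"
    for m i r
  have finA: "finite A"
    by (rule finite_subset[of _ "coeff_supp p \<times> UNIV \<times> R"]) (use R p in \<open>auto simp: A_def\<close>)
  have fibre: "contributions R p m' = {t \<in> A. target t = m'}" for m'
    by (auto simp: contributions_def A_def target_def coeff_supp_def)
  have "eval_coeffs (total_deriv_coeffs R k p) x =
      (\<Sum>m'\<in>target ` A. total_deriv_coeffs R k p m' * monom_x m' x)"
  proof (rule eval_coeffs_superset)
    show "coeff_supp (total_deriv_coeffs R k p) \<subseteq> target ` A"
      using contributions_nonempty by (fastforce simp: coeff_supp_def fibre)
  qed (use finA in simp)
  also have "\<dots> = (\<Sum>m'\<in>target ` A. \<Sum>t\<in>{t \<in> A. target t = m'}. g t)"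
    unfolding total_deriv_coeffs_def fibre sum_distrib_right g_def by (intro sum.cong) auto
  also have "\<dots> = (\<Sum>t\<in>A. g t)"
    by (rule sum.image_gen[OF finA, symmetric])
  also have "\<dots> = (\<Sum>(m, i, r)\<in>coeff_supp p \<times> (UNIV :: 'sp set) \<times> R. F m i r)"
  proof (rule sum.mono_neutral_cong_left)
    show "finite (coeff_supp p \<times> (UNIV :: 'sp set) \<times> R)" using R p by simp
  qed (auto simp: A_def F_def g_def target_def contribution_def monom_x_cplus)
  also have "\<dots> = (\<Sum>m\<in>coeff_supp p. \<Sum>i\<in>UNIV. \<Sum>r\<in>R. F m i r)"
    by (simp only: sum.cartesian_product split_def)
  also have "\<dots> = (\<Sum>i\<in>UNIV. \<Sum>m\<in>coeff_supp p. \<Sum>r\<in>R. F m i r)"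
    by (rule sum.swap)
  also have "\<dots> = total_deriv R k (eval_coeffs p) x"
    unfolding total_deriv_def mass_action_component pderiv_x_eval_coeffs[OF p] F_def
    by (simp only: sum_distrib_right) (simp only: sum_distrib_left)
  finally show "total_deriv R k (eval_coeffs p) x = eval_coeffs (total_deriv_coeffs R k p) x" ..
qed

lemma finite_coeff_supp_funpow_total_deriv_coeffs:
  fixes R :: "('sp::finite) reaction set"
  shows "finite R \<Longrightarrow> finite (coeff_supp p) \<Longrightarrow> finite (coeff_supp ((total_deriv_coeffs R k ^^ l) p))"
  by (induction l) (simp_all add: finite_coeff_supp_total_deriv_coeffs)

lemma funpow_total_deriv_eval_coeffs:
  fixes R :: "('sp::finite) reaction set"
  assumes "finite R" "finite (coeff_supp p)"
  shows "(total_deriv R k ^^ l) (eval_coeffs p) = eval_coeffs ((total_deriv_coeffs R k ^^ l) p)"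
  by (induction l)
     (simp_all add: assms total_deriv_eval_coeffs finite_coeff_supp_funpow_total_deriv_coeffs)

definition pderiv_coeffs :: "'sp \<Rightarrow> ('sp cplx \<Rightarrow> real) \<Rightarrow> 'sp cplx \<Rightarrow> real" where
  "pderiv_coeffs i p m = real (m i + 1) * p (m(i := m i + 1))"

lemma coeff_supp_pderiv_coeffs:
  "coeff_supp (pderiv_coeffs i p) \<subseteq> (\<lambda>m. cdec m i) ` {m \<in> coeff_supp p. 0 < m i}"
proof
  fix m assume "m \<in> coeff_supp (pderiv_coeffs i p)"
  then have "m(i := m i + 1) \<in> {m \<in> coeff_supp p. 0 < m i}"
    by (simp add: coeff_supp_def pderiv_coeffs_def)
  moreover have "m = cdec (m(i := m i + 1)) i" by (simp add: cdec_def)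
  ultimately show "m \<in> (\<lambda>m. cdec m i) ` {m \<in> coeff_supp p. 0 < m i}" by blast
qed

lemma finite_coeff_supp_pderiv_coeffs:
  "finite (coeff_supp p) \<Longrightarrow> finite (coeff_supp (pderiv_coeffs i p))"
  by (rule finite_subset[OF coeff_supp_pderiv_coeffs]) auto

lemma pderiv_x_eval_coeffs_eq:
  assumes p: "finite (coeff_supp p)"
  shows "pderiv_x i (eval_coeffs p) = eval_coeffs (pderiv_coeffs i p)"
proof
  fix x :: "real ^ 'a"
  let ?D = "{m \<in> coeff_supp p. 0 < m i}"
  have inj: "inj_on (\<lambda>m. cdec m i) ?D"
  proof (rule inj_onI)
    fix a b assume a: "a \<in> ?D" and b: "b \<in> ?D" and eq: "cdec a i = cdec b i"
    show "a = b"
    proof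
      fix j show "a j = b j"
        using fun_cong[OF eq, of j] a b by (cases "j = i") (auto simp: cdec_def)
    qed
  qed
  have "eval_coeffs (pderiv_coeffs i p) x =
      (\<Sum>m\<in>(\<lambda>m. cdec m i) ` ?D. pderiv_coeffs i p m * monom_x m x)"
    by (rule eval_coeffs_superset[OF _ coeff_supp_pderiv_coeffs]) (use p in auto)
  also have "\<dots> = (\<Sum>m\<in>?D. pderiv_coeffs i p (cdec m i) * monom_x (cdec m i) x)"
    by (simp add: sum.reindex[OF inj])
  also have "\<dots> = (\<Sum>m\<in>?D. p m * (real (m i) * monom_x (cdec m i) x))"
  proof (rule sum.cong[OF refl])
    fix m assume "m \<in> ?D"
    then have "(cdec m i)(i := cdec m i i + 1) = m" "cdec m i i + 1 = m i"
      by (auto simp: cdec_def)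
    then show "pderiv_coeffs i p (cdec m i) * monom_x (cdec m i) x =
        p m * (real (m i) * monom_x (cdec m i) x)"
      by (simp add: pderiv_coeffs_def)
  qed
  also have "\<dots> = (\<Sum>m\<in>coeff_supp p. p m * (real (m i) * monom_x (cdec m i) x))"
    by (rule sum.mono_neutral_left) (use p in auto)
  finally show "pderiv_x i (eval_coeffs p) x = eval_coeffs (pderiv_coeffs i p) x"
    by (simp add: pderiv_x_eval_coeffs[OF p])
qed

lemma funpow_pderiv_coeffs:
  "(pderiv_coeffs i ^^ n) p m = pochhammer (real (m i) + 1) n * p (m(i := m i + n))"
proof (induction n arbitrary: m)
  case (Suc n)
  have "(pderiv_coeffs i ^^ Suc n) p m = real (m i + 1) * (pderiv_coeffs i ^^ n) p (m(i := m i + 1))"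
    by (simp add: pderiv_coeffs_def)
  also have "\<dots> = real (m i + 1) * (pochhammer (real (m i + 1) + 1) n * p (m(i := m i + 1 + n)))"
    by (simp only: Suc.IH fun_upd_upd fun_upd_same)
  finally show ?case by (simp add: pochhammer_rec algebra_simps fun_upd_def)
qed simp

definition pderivs_x :: "'sp cplx \<Rightarrow> 'sp list \<Rightarrow> (real ^ 'sp::finite \<Rightarrow> real) \<Rightarrow> real ^ 'sp \<Rightarrow> real" where
  "pderivs_x e xs f = foldr (\<lambda>i. pderiv_x i ^^ e i) xs f"

definition pderivs_coeffs :: "'sp cplx \<Rightarrow> 'sp list \<Rightarrow> ('sp cplx \<Rightarrow> real) \<Rightarrow> 'sp cplx \<Rightarrow> real" where
  "pderivs_coeffs e xs p = foldr (\<lambda>i. pderiv_coeffs i ^^ e i) xs p"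

lemma funpow_pderiv_x_eval_coeffs:
  "finite (coeff_supp p) \<Longrightarrow>
     (pderiv_x i ^^ n) (eval_coeffs p) = eval_coeffs ((pderiv_coeffs i ^^ n) p) \<and>
     finite (coeff_supp ((pderiv_coeffs i ^^ n) p))"
  by (induction n) (auto simp: pderiv_x_eval_coeffs_eq finite_coeff_supp_pderiv_coeffs)

lemma pderivs_x_eval_coeffs:
  "finite (coeff_supp p) \<Longrightarrow>
     pderivs_x e xs (eval_coeffs p) = eval_coeffs (pderivs_coeffs e xs p) \<and>
     finite (coeff_supp (pderivs_coeffs e xs p))"
  by (induction xs) (auto simp: pderivs_x_def pderivs_coeffs_def funpow_pderiv_x_eval_coeffs)

lemma pderivs_coeffs_apply:
  assumes "distinct xs"
  shows "pderivs_coeffs e xs p m = (\<Prod>i\<leftarrow>xs. pochhammer (real (m i) + 1) (e i)) *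
           p (\<lambda>j. if j \<in> set xs then m j + e j else m j)"
  using assms
proof (induction xs arbitrary: m)
  case (Cons i xs)
  let ?m = "m(i := m i + e i)"
  have ni: "i \<notin> set xs" and dxs: "distinct xs" using Cons.prems by simp_all
  have "pderivs_coeffs e (i # xs) p m = pochhammer (real (m i) + 1) (e i) * pderivs_coeffs e xs p ?m"
    by (simp add: pderivs_coeffs_def funpow_pderiv_coeffs)
  also have "\<dots> = pochhammer (real (m i) + 1) (e i) * ((\<Prod>j\<leftarrow>xs. pochhammer (real (?m j) + 1) (e j)) *
      p (\<lambda>j. if j \<in> set xs then ?m j + e j else ?m j))"
    by (simp only: Cons.IH[OF dxs])
  also have "(\<Prod>j\<leftarrow>xs. pochhammer (real (?m j) + 1) (e j)) = (\<Prod>j\<leftarrow>xs. pochhammer (real (m j) + 1) (e j))"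
    using ni by (intro arg_cong[where f = prod_list] map_cong) auto
  also have "(\<lambda>j. if j \<in> set xs then ?m j + e j else ?m j) = (\<lambda>j. if j \<in> set (i # xs) then m j + e j else m j)"
    using ni by auto
  finally show ?case by simp
qed (simp add: pderivs_coeffs_def)

lemma monom_x_zero: "monom_x m (0 :: real ^ 'sp::finite) = (if m = (\<lambda>_. 0) then 1 else 0)"
  by (auto simp: monom_x_def fun_eq_iff zero_power intro: prod_zero)

lemma eval_coeffs_zero:
  assumes "finite (coeff_supp p)"
  shows "eval_coeffs p 0 = p (\<lambda>_. 0)"
proof -
  have "eval_coeffs p 0 = (\<Sum>m\<in>insert (\<lambda>_. 0) (coeff_supp p). p m * monom_x m 0)"
    by (rule eval_coeffs_superset) (use assms in auto)
  also have "\<dots> = p (\<lambda>_. 0)"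
    using assms by (simp add: monom_x_zero if_distrib sum.delta cong: if_cong)
  finally show ?thesis .
qed

text \<open>Coefficients are recovered as iterated partial derivatives at the origin.\<close>
lemma eval_coeffs_inject:
  assumes p: "finite (coeff_supp p)" and q: "finite (coeff_supp q)"
    and eq: "eval_coeffs p = eval_coeffs (q :: 'sp::finite cplx \<Rightarrow> real)"
  shows "p = q"
proof
  fix m
  obtain xs :: "'sp list" where xs: "set xs = UNIV" "distinct xs"
    using finite_distinct_list[of "UNIV :: 'sp set"] by auto
  have coeff: "eval_coeffs (pderivs_coeffs m xs p') 0 = (\<Prod>i\<leftarrow>xs. pochhammer 1 (m i)) * p' m"
    if "finite (coeff_supp p')" for p'
  proof -
    have "finite (coeff_supp (pderivs_coeffs m xs p'))" using pderivs_x_eval_coeffs that by blast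
    then have "eval_coeffs (pderivs_coeffs m xs p') 0 = pderivs_coeffs m xs p' (\<lambda>_. 0)"
      by (rule eval_coeffs_zero)
    moreover have "(\<lambda>j. if j \<in> set xs then 0 + m j else 0) = m" using xs by auto
    ultimately show ?thesis by (simp add: pderivs_coeffs_apply[OF xs(2)])
  qed
  have "pderivs_x m xs (eval_coeffs p) = pderivs_x m xs (eval_coeffs q)" using eq by simp
  then have "eval_coeffs (pderivs_coeffs m xs p) 0 = eval_coeffs (pderivs_coeffs m xs q) 0"
    using pderivs_x_eval_coeffs[OF p] pderivs_x_eval_coeffs[OF q] by simp
  moreover have "(\<Prod>i\<leftarrow>xs. pochhammer (1::real) (m i)) \<noteq> 0"
    using pochhammer_pos[of "1::real"] by (auto simp: prod_list_zero_iff less_le)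
  ultimately show "p m = q m" using coeff[OF p] coeff[OF q] by simp
qed

lemma eval_coeffs_var_coeffs: "eval_coeffs (var_coeffs i) = (\<lambda>x. x $ i)"
proof
  fix x :: "real ^ 'a"
  have "coeff_supp (var_coeffs i) = {cunit i}" by (auto simp: coeff_supp_def var_coeffs_def)
  then show "eval_coeffs (var_coeffs i) x = x $ i"
    by (simp add: eval_coeffs_def var_coeffs_def monom_x_cunit)
qed

lemma finite_coeff_supp_var_coeffs: "finite (coeff_supp (var_coeffs i))"
  by (rule finite_subset[of _ "{cunit i}"]) (auto simp: coeff_supp_def var_coeffs_def)

lemma total_deriv_iter_eq_imp_coeffs_eq:
  fixes R :: "('sp::finite) reaction set"
  assumes R: "finite R"
    and eq: "total_deriv_iter R k1 l (\<lambda>x. x $ i) = total_deriv_iter R k2 l (\<lambda>x. x $ i)"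
  shows "(total_deriv_coeffs R k1 ^^ l) (var_coeffs i) = (total_deriv_coeffs R k2 ^^ l) (var_coeffs i)"
proof -
  have fin: "finite (coeff_supp ((total_deriv_coeffs R k ^^ l) (var_coeffs i)))" for k
    by (rule finite_coeff_supp_funpow_total_deriv_coeffs[OF R finite_coeff_supp_var_coeffs])
  show ?thesis
  proof (rule eval_coeffs_inject[OF fin fin])
    show "eval_coeffs ((total_deriv_coeffs R k1 ^^ l) (var_coeffs i)) =
        eval_coeffs ((total_deriv_coeffs R k2 ^^ l) (var_coeffs i))"
      using eq funpow_total_deriv_eval_coeffs[OF R finite_coeff_supp_var_coeffs]
      by (simp add: total_deriv_iter_def eval_coeffs_var_coeffs[symmetric])
  qed
qed

section \<open>Restriction to a subnetwork\<close>

definition supported_on :: "'sp set \<Rightarrow> 'sp cplx \<Rightarrow> bool" where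
  "supported_on V m \<longleftrightarrow> (\<forall>x. x \<notin> V \<longrightarrow> m x = 0)"

lemma supported_on_cplus: "supported_on V a \<Longrightarrow> supported_on V b \<Longrightarrow> supported_on V (cplus a b)"
  by (simp add: supported_on_def cplus_def)

lemma supported_on_cunit: "x \<in> V \<Longrightarrow> supported_on V (cunit x)"
  by (auto simp: supported_on_def cunit_def)

lemma total_deriv_coeffs_restrict:
  assumes sub: "R0 \<subseteq> R"
    and foreign: "\<And>r. r \<in> R - R0 \<Longrightarrow> \<exists>x. 0 < fst r x \<and> x \<notin> V"
    and local: "\<And>r i. r \<in> R0 \<Longrightarrow> net_change r i \<noteq> 0 \<Longrightarrow> i \<in> V"
    and pq: "\<And>m. supported_on V m \<Longrightarrow> p m = q m"
    and m': "supported_on V m'"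
  shows "total_deriv_coeffs R k p m' = total_deriv_coeffs R0 k q m'"
proof -
  have source: "r \<in> R0 \<and> supported_on V m"
    if r: "r \<in> R" and d: "net_change r i \<noteq> 0" and e: "m' = cplus (cdec m i) (fst r)" for m i r
  proof -
    have r0: "r \<in> R0"
    proof (rule ccontr)
      assume "r \<notin> R0"
      then obtain x where "0 < fst r x" "x \<notin> V" using foreign r by blast
      then show False using m' e by (simp add: supported_on_def cplus_def)
    qed
    then have "i \<in> V" using local d by blast
    moreover have "cdec m i x = 0" if "x \<notin> V" for x
      using m' e that by (simp add: supported_on_def cplus_def)
    ultimately have "supported_on V m"
      unfolding supported_on_def cdec_def by (metis fun_upd_other)
    with r0 show ?thesis ..
  qed
  have same: "t \<in> contributions R p m' \<longleftrightarrow> t \<in> contributions R0 q m'" for t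
  proof
    assume "t \<in> contributions R p m'"
    then show "t \<in> contributions R0 q m'"
      by (elim contributionsE) (simp add: contributions_def, metis pq source)
  next
    assume "t \<in> contributions R0 q m'"
    then show "t \<in> contributions R p m'"
      by (elim contributionsE) (simp add: contributions_def, metis pq source sub subsetD)
  qed
  have "contribution k p t = contribution k q t" if "t \<in> contributions R0 q m'" for t
    using that by (elim contributionsE) (simp add: contribution_def, metis pq source sub subsetD)
  then show ?thesis
    unfolding total_deriv_coeffs_def by (intro sum.cong) (auto simp: same)
qed

lemma funpow_total_deriv_coeffs_restrict:
  assumes "R0 \<subseteq> R"
    and "\<And>r. r \<in> R - R0 \<Longrightarrow> \<exists>x. 0 < fst r x \<and> x \<notin> V"
    and "\<And>r i. r \<in> R0 \<Longrightarrow> net_change r i \<noteq> 0 \<Longrightarrow> i \<in> V"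
    and "supported_on V m"
  shows "(total_deriv_coeffs R k ^^ l) p m = (total_deriv_coeffs R0 k ^^ l) p m"
  using assms(4)
proof (induction l arbitrary: m)
  case (Suc l)
  then show ?case using total_deriv_coeffs_restrict[OF assms(1-3)] by simp
qed simp


section \<open>Enzyme chains\<close>

lemma net_change_rA:
  "net_change (rA Y S U j) x = of_bool (x = U j) - of_bool (x = Y) - of_bool (x = S (j - 1))"
  by (simp add: net_change_def rA_def cunit_def cplus_def)

lemma net_change_rB:
  "net_change (rB Y S U j) x = of_bool (x = Y) + of_bool (x = S (j - 1)) - of_bool (x = U j)"
  by (simp add: net_change_def rB_def cunit_def cplus_def)

lemma net_change_rC:
  "net_change (rC Y S U j) x = of_bool (x = Y) + of_bool (x = S j) - of_bool (x = U j)"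
  by (simp add: net_change_def rC_def cunit_def cplus_def)

lemma fst_rA: "fst (rA Y S U j) = cplus (cunit Y) (cunit (S (j - 1)))"
  and fst_rB: "fst (rB Y S U j) = cunit (U j)"
  and fst_rC: "fst (rC Y S U j) = cunit (U j)"
  by (simp_all add: rA_def rB_def rC_def)

lemma mem_chain_reactions:
  "r \<in> chain_reactions Y S U L \<longleftrightarrow>
     (\<exists>j\<in>{1..L}. r = rA Y S U j \<or> r = rB Y S U j \<or> r = rC Y S U j)"
  by (auto simp: chain_reactions_def)

lemma finite_chain_reactions: "finite (chain_reactions Y S U L)"
  by (simp add: chain_reactions_def)

definition chain_species :: "'sp \<Rightarrow> (nat \<Rightarrow> 'sp) \<Rightarrow> (nat \<Rightarrow> 'sp) \<Rightarrow> nat \<Rightarrow> 'sp set" where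
  "chain_species Y S U L = insert Y (S ` {0..L} \<union> U ` {1..L})"

lemma parity_cases:
  fixes l :: nat
  obtains t where "l = 2 * t" "l div 2 = t" "even l" | t where "l = 2 * t + 1" "l div 2 = t" "odd l"
  by (metis even_two_times_div_two odd_two_times_div_two_succ)

locale enzyme_chain =
  fixes Y :: "'sp::finite" and S U :: "nat \<Rightarrow> 'sp" and L :: nat
  assumes L_pos: "1 \<le> L"
    and S_ne_Y: "j \<le> L \<Longrightarrow> S j \<noteq> Y"
    and U_ne_Y: "1 \<le> j \<Longrightarrow> j \<le> L \<Longrightarrow> U j \<noteq> Y"
    and U_ne_S: "j \<le> L \<Longrightarrow> 1 \<le> j' \<Longrightarrow> j' \<le> L \<Longrightarrow> U j' \<noteq> S j"
    and inj_S: "inj_on S {0..L}"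
    and inj_U: "inj_on U {1..L}"
begin

abbreviation "reactions \<equiv> chain_reactions Y S U L"
abbreviation "species \<equiv> chain_species Y S U L"
abbreviation "ra \<equiv> rA Y S U"
abbreviation "rb \<equiv> rB Y S U"
abbreviation "rc \<equiv> rC Y S U"

lemma distinct_species [simp]:
  "j \<le> L \<Longrightarrow> S j \<noteq> Y" "j \<le> L \<Longrightarrow> Y \<noteq> S j"
  "1 \<le> j \<Longrightarrow> j \<le> L \<Longrightarrow> U j \<noteq> Y" "1 \<le> j \<Longrightarrow> j \<le> L \<Longrightarrow> Y \<noteq> U j"
  "j \<le> L \<Longrightarrow> 1 \<le> j' \<Longrightarrow> j' \<le> L \<Longrightarrow> U j' \<noteq> S j"
  "j \<le> L \<Longrightarrow> 1 \<le> j' \<Longrightarrow> j' \<le> L \<Longrightarrow> S j \<noteq> U j'"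
  using S_ne_Y U_ne_Y U_ne_S by metis+

lemma S_eq_iff [simp]: "i \<le> L \<Longrightarrow> j \<le> L \<Longrightarrow> S i = S j \<longleftrightarrow> i = j"
  using inj_onD[OF inj_S] by fastforce

lemma U_eq_iff [simp]: "1 \<le> i \<Longrightarrow> i \<le> L \<Longrightarrow> 1 \<le> j \<Longrightarrow> j \<le> L \<Longrightarrow> U i = U j \<longleftrightarrow> i = j"
  using inj_onD[OF inj_U] by fastforce

text \<open>Stated with an arbitrary subtrahend so that they also apply to \<open>j - Suc 0\<close>, the simp
  normal form of \<open>j - 1\<close>.\<close>
lemma distinct_species_diff [simp]:
  "j \<le> L \<Longrightarrow> S (j - n) \<noteq> Y" "j \<le> L \<Longrightarrow> Y \<noteq> S (j - n)"
  "j \<le> L \<Longrightarrow> 1 \<le> j' \<Longrightarrow> j' \<le> L \<Longrightarrow> U j' \<noteq> S (j - n)"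
  "j \<le> L \<Longrightarrow> 1 \<le> j' \<Longrightarrow> j' \<le> L \<Longrightarrow> S (j - n) \<noteq> U j'"
  "i \<le> L \<Longrightarrow> j \<le> L \<Longrightarrow> S (i - n) = S j \<longleftrightarrow> i - n = j"
  "i \<le> L \<Longrightarrow> j \<le> L \<Longrightarrow> S i = S (j - n) \<longleftrightarrow> i = j - n"
  by simp_all

lemma net_change_nonzero_cases:
  assumes "r \<in> reactions" "net_change r i \<noteq> 0"
  obtains j where "j \<in> {1..L}" "r = ra j" "i = U j \<or> i = Y \<or> i = S (j - 1)"
  | j where "j \<in> {1..L}" "r = rb j" "i = U j \<or> i = Y \<or> i = S (j - 1)"
  | j where "j \<in> {1..L}" "r = rc j" "i = U j \<or> i = Y \<or> i = S j"
proof -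
  from assms(1) obtain j where j: "j \<in> {1..L}" "r = ra j \<or> r = rb j \<or> r = rc j"
    unfolding mem_chain_reactions by blast
  then show thesis
    using that assms(2) by (auto simp: net_change_rA net_change_rB net_change_rC of_bool_def split: if_splits)
qed

lemma net_change_species: "r \<in> reactions \<Longrightarrow> net_change r i \<noteq> 0 \<Longrightarrow> i \<in> species"
  by (erule net_change_nonzero_cases) (auto simp: chain_species_def)

lemma net_change_S_L: "r \<in> reactions \<Longrightarrow> net_change r (S L) \<noteq> 0 \<Longrightarrow> r = rc L"
  by (erule net_change_nonzero_cases) (use L_pos in auto)

lemma net_change_U:
  "r \<in> reactions \<Longrightarrow> net_change r (U j) \<noteq> 0 \<Longrightarrow> j \<in> {1..L} \<Longrightarrow> r = ra j \<or> r = rb j \<or> r = rc j"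
  by (erule net_change_nonzero_cases) auto

lemma chain_reactions_memI: "j \<in> {1..L} \<Longrightarrow> ra j \<in> reactions" "j \<in> {1..L} \<Longrightarrow> rb j \<in> reactions"
  "j \<in> {1..L} \<Longrightarrow> rc j \<in> reactions"
  by (auto simp: mem_chain_reactions)

lemma L_mem: "L \<in> {1..L}"
  using L_pos by simp

text \<open>The weight of a species is the number of reaction steps leading from it to \<open>S L\<close>
  along the chain: \<open>S (j - 1) \<rightarrow> U j \<rightarrow> S j\<close>.\<close>
definition weight :: "'sp \<Rightarrow> nat" where
  "weight x = (if x \<in> S ` {0..L} then 2 * (L - the_inv_into {0..L} S x)
               else if x \<in> U ` {1..L} then 2 * (L - the_inv_into {1..L} U x) + 1 else 0)"

lemma weight_S [simp]: "j \<le> L \<Longrightarrow> weight (S j) = 2 * (L - j)"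
  unfolding weight_def using the_inv_into_f_f[OF inj_S, of j] by auto

lemma weight_U [simp]: "1 \<le> j \<Longrightarrow> j \<le> L \<Longrightarrow> weight (U j) = 2 * (L - j) + 1"
proof -
  assume j: "1 \<le> j" "j \<le> L"
  then have "U j \<notin> S ` {0..L}" by auto
  then show ?thesis unfolding weight_def using the_inv_into_f_f[OF inj_U, of j] j by auto
qed

lemma weight_Y [simp]: "weight Y = 0"
proof -
  have "Y \<notin> S ` {0..L}" "Y \<notin> U ` {1..L}" by auto
  then show ?thesis unfolding weight_def by simp
qed

definition wdeg :: "'sp cplx \<Rightarrow> nat" where
  "wdeg m = (\<Sum>x\<in>UNIV. m x * weight x)"

definition sdeg :: "'sp cplx \<Rightarrow> nat" where
  "sdeg m = (\<Sum>x\<in>UNIV. if x = Y then 0 else m x)"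

definition enzyme_pow :: "nat \<Rightarrow> 'sp cplx" where
  "enzyme_pow n = (\<lambda>x. if x = Y then n else 0)"

lemma wdeg_cplus: "wdeg (cplus a b) = wdeg a + wdeg b"
  by (simp add: wdeg_def cplus_def sum.distrib add_mult_distrib)

lemma sdeg_cplus: "sdeg (cplus a b) = sdeg a + sdeg b"
  by (simp add: sdeg_def cplus_def sum.distrib[symmetric] if_distrib cong: if_cong)

lemma wdeg_cunit: "wdeg (cunit x) = weight x"
proof -
  have "(\<lambda>z. cunit x z * weight z) = (\<lambda>z. if x = z then weight x else 0)"
    by (auto simp: cunit_def)
  then show ?thesis unfolding wdeg_def by (simp only:) simp
qed

lemma sdeg_cunit: "sdeg (cunit x) = (if x = Y then 0 else 1)"
proof -
  have "(\<lambda>z. if z = Y then 0 else cunit x z) = (\<lambda>z. if x = z then (if x = Y then 0 else 1) else 0)"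
    by (auto simp: cunit_def)
  then show ?thesis unfolding sdeg_def by (simp only:) simp
qed

lemma wdeg_enzyme_pow: "wdeg (enzyme_pow n) = 0"
  by (simp add: wdeg_def enzyme_pow_def)

lemma sdeg_enzyme_pow: "sdeg (enzyme_pow n) = 0"
  by (simp add: sdeg_def enzyme_pow_def)

lemma wdeg_cdec: "0 < m i \<Longrightarrow> wdeg m = wdeg (cdec m i) + weight i"
  using wdeg_cplus[of "cdec m i" "cunit i"] by (simp add: cplus_cdec_cunit wdeg_cunit)

lemma sdeg_cdec: "0 < m i \<Longrightarrow> sdeg m = sdeg (cdec m i) + (if i = Y then 0 else 1)"
  using sdeg_cplus[of "cdec m i" "cunit i"] by (simp add: cplus_cdec_cunit sdeg_cunit)

lemma sdeg_reactant: "r \<in> reactions \<Longrightarrow> sdeg (fst r) = 1"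
  unfolding mem_chain_reactions
  by (elim bexE disjE) (auto simp: fst_rA fst_rB fst_rC sdeg_cplus sdeg_cunit)

text \<open>Differentiating through \<open>x\<^sub>i\<close> along \<open>r\<close> replaces \<open>x\<^sub>i\<close> by the reactant complex of \<open>r\<close>:
  this raises the weighted degree by at most one, and only the steps \<open>ra j\<close> at \<open>U j\<close> and
  \<open>rc j\<close> at \<open>S j\<close> attain the bound.\<close>
lemma weight_S_pred: "j \<in> {1..L} \<Longrightarrow> weight (S (j - 1)) = 2 * (L - j) + 2"
  by (subst weight_S) auto

lemma wdeg_reactants:
  assumes "j \<in> {1..L}"
  shows "wdeg (fst (ra j)) = 2 * (L - j) + 2" and "wdeg (fst (rb j)) = 2 * (L - j) + 1"
    and "wdeg (fst (rc j)) = 2 * (L - j) + 1"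
  using assms weight_S_pred[OF assms] by (simp_all add: fst_rA fst_rB fst_rC wdeg_cplus wdeg_cunit)

lemma wdeg_reactant:
  assumes "r \<in> reactions" "net_change r i \<noteq> 0" "i \<noteq> Y"
  shows "wdeg (fst r) \<le> weight i + 1 \<and>
    (wdeg (fst r) = weight i + 1 \<longrightarrow> (\<exists>j\<in>{1..L}. (r = ra j \<and> i = U j) \<or> (r = rc j \<and> i = S j)))"
  using assms(1,2)
proof (cases rule: net_change_nonzero_cases)
  case (1 j)
  then have "i = U j \<or> i = S (j - 1)" using assms(3) by blast
  then show ?thesis
  proof
    assume i: "i = U j"
    then have "wdeg (fst r) = weight i + 1" using 1 wdeg_reactants(1) by simp
    then show ?thesis using 1 i by auto
  qed (use 1 wdeg_reactants(1) weight_S_pred in auto)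
next
  case (2 j)
  then have "i = U j \<or> i = S (j - 1)" using assms(3) by blast
  then show ?thesis using 2 wdeg_reactants(2) weight_S_pred by (elim disjE) auto
next
  case (3 j)
  then have "i = U j \<or> i = S j" using assms(3) by blast
  then show ?thesis
  proof
    assume i: "i = S j"
    then have "wdeg (fst r) = weight i + 1" using 3 wdeg_reactants(3) by simp
    then show ?thesis using 3 i by auto
  qed (use 3 wdeg_reactants(3) in auto)
qed

subsection \<open>Leading monomials\<close>

text \<open>Following the chain backwards from \<open>S L\<close>, the \<open>l\<close>-th derivative has the leading
  monomial \<open>y\<^sup>\<lfloor>l/2\<rfloor> x\<close>, where \<open>x\<close> is the species of weight \<open>l\<close>; it is reached by the
  reactions \<open>rc L, ra L, rc (L - 1), ra (L - 1), \<dots>\<close>, and each \<open>ra\<close>-step contributes a factor \<open>y\<close>.\<close>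
definition lead_species :: "nat \<Rightarrow> 'sp" where
  "lead_species l = (if even l then S (L - l div 2) else U (L - l div 2))"

definition lead_reaction :: "nat \<Rightarrow> 'sp reaction" where
  "lead_reaction l = (if even l then rc (L - l div 2) else ra (L - l div 2))"

definition lead_monom :: "nat \<Rightarrow> 'sp cplx" where
  "lead_monom l = cplus (enzyme_pow (l div 2)) (cunit (lead_species l))"

definition lead_coeff :: "('sp reaction \<Rightarrow> real) \<Rightarrow> nat \<Rightarrow> real" where
  "lead_coeff k l = (\<Prod>l'<l. k (lead_reaction l'))"

lemma lead_species_ne_Y: "l \<le> 2 * L \<Longrightarrow> lead_species l \<noteq> Y"
  by (cases l rule: parity_cases) (auto simp: lead_species_def)

lemma sdeg_lead_monom: "l \<le> 2 * L \<Longrightarrow> sdeg (lead_monom l) = 1"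
  by (simp add: lead_monom_def sdeg_cplus sdeg_enzyme_pow sdeg_cunit lead_species_ne_Y)

lemma wdeg_lead_monom: "l \<le> 2 * L \<Longrightarrow> wdeg (lead_monom l) = l"
  by (cases l rule: parity_cases)
     (auto simp: lead_monom_def wdeg_cplus wdeg_enzyme_pow wdeg_cunit lead_species_def)

lemma lead_monom_lead_species: "l \<le> 2 * L \<Longrightarrow> lead_monom l (lead_species l) = 1"
  using lead_species_ne_Y by (simp add: lead_monom_def cplus_def enzyme_pow_def cunit_def)

lemma lead_monom_pos_species: "0 < lead_monom l i \<Longrightarrow> i \<noteq> Y \<Longrightarrow> i = lead_species l"
  by (auto simp: lead_monom_def cplus_def enzyme_pow_def cunit_def split: if_splits)

lemma lead_reaction_mem: "l < 2 * L \<Longrightarrow> lead_reaction l \<in> reactions"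
  by (cases l rule: parity_cases) (auto simp: mem_chain_reactions lead_reaction_def intro!: bexI[of _ "L - l div 2"])

lemma net_change_lead_reaction: "l < 2 * L \<Longrightarrow> net_change (lead_reaction l) (lead_species l) = 1"
  by (cases l rule: parity_cases)
     (auto simp: lead_reaction_def lead_species_def net_change_rA net_change_rC)

lemma lead_monom_Suc:
  "l < 2 * L \<Longrightarrow> cplus (cdec (lead_monom l) (lead_species l)) (fst (lead_reaction l)) = lead_monom (Suc l)"
proof (cases l rule: parity_cases)
  case (1 t)
  moreover assume "l < 2 * L"
  moreover have "Suc l div 2 = t" "odd (Suc l)" using 1 by auto
  ultimately show ?thesis
    by (intro ext) (auto simp: lead_monom_def lead_reaction_def lead_species_def fst_rC
                              cplus_def cdec_def enzyme_pow_def cunit_def)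
next
  case (2 t)
  moreover assume "l < 2 * L"
  moreover have "Suc l div 2 = Suc t" "even (Suc l)" "L - t - 1 = L - Suc t" using 2 by auto
  ultimately show ?thesis
    by (intro ext) (auto simp: lead_monom_def lead_reaction_def lead_species_def fst_rA
                              cplus_def cdec_def enzyme_pow_def cunit_def)
qed

lemma lead_reaction_unique:
  assumes "l < 2 * L" "j \<in> {1..L}" "(r = ra j \<and> i = U j) \<or> (r = rc j \<and> i = S j)"
    and "i = lead_species l"
  shows "r = lead_reaction l"
  using assms by (cases l rule: parity_cases) (auto simp: lead_species_def lead_reaction_def)

lemma lead_coeff_pos: "(\<forall>r\<in>reactions. 0 < k r) \<Longrightarrow> l \<le> 2 * L \<Longrightarrow> 0 < lead_coeff k l"
  unfolding lead_coeff_def by (intro prod_pos) (use lead_reaction_mem in fastforce)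

definition weight_bounded :: "nat \<Rightarrow> ('sp cplx \<Rightarrow> real) \<Rightarrow> bool" where
  "weight_bounded l p \<longleftrightarrow> (\<forall>m. p m \<noteq> 0 \<longrightarrow>
     1 \<le> sdeg m \<and> (sdeg m = 1 \<longrightarrow> wdeg m \<le> l \<and> (wdeg m = l \<longrightarrow> m = lead_monom l)))"

lemma contribution_wdeg_step:
  assumes p: "weight_bounded l p" and l: "l < 2 * L"
    and t: "(m, i, r) \<in> contributions reactions p m'" and m': "sdeg m' = 1"
  shows "wdeg m' \<le> Suc l \<and>
    (wdeg m' = Suc l \<longrightarrow> m = lead_monom l \<and> i = lead_species l \<and> r = lead_reaction l)"
proof -
  from t have pm: "p m \<noteq> 0" and mi: "0 < m i" and r: "r \<in> reactions" and d: "net_change r i \<noteq> 0"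
    and m'_eq: "m' = cplus (cdec m i) (fst r)"
    by (auto simp: contributions_def)
  have "sdeg m' = sdeg (cdec m i) + 1" using m'_eq r by (simp add: sdeg_cplus sdeg_reactant)
  moreover have "1 \<le> sdeg m" using p pm by (simp add: weight_bounded_def)
  ultimately have iY: "i \<noteq> Y" and sm: "sdeg m = 1"
    using m' sdeg_cdec[of m i, OF mi] by (auto split: if_splits)
  then have lm: "wdeg m \<le> l" "wdeg m = l \<longrightarrow> m = lead_monom l"
    using p pm by (auto simp: weight_bounded_def)
  have wm': "wdeg m' + weight i = wdeg m + wdeg (fst r)"
    using m'_eq wdeg_cdec[of m i, OF mi] by (simp add: wdeg_cplus)
  note wr = wdeg_reactant[OF r d iY]
  show ?thesis
  proof
    show "wdeg m' \<le> Suc l" using wm' wr lm by linarith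
    show "wdeg m' = Suc l \<longrightarrow> m = lead_monom l \<and> i = lead_species l \<and> r = lead_reaction l"
    proof
      assume "wdeg m' = Suc l"
      then have "wdeg m = l" "wdeg (fst r) = weight i + 1" using wm' wr lm by linarith+
      then have mlead: "m = lead_monom l"
        and "\<exists>j\<in>{1..L}. (r = ra j \<and> i = U j) \<or> (r = rc j \<and> i = S j)"
        using lm wr by auto
      moreover have "i = lead_species l" using lead_monom_pos_species mi mlead iY by blast
      ultimately show "m = lead_monom l \<and> i = lead_species l \<and> r = lead_reaction l"
        using lead_reaction_unique[OF l] by blast
    qed
  qed
qed

lemma weight_bounded_total_deriv_coeffs:
  assumes p: "weight_bounded l p" and l: "l < 2 * L"
  shows "weight_bounded (Suc l) (total_deriv_coeffs reactions k p)"
  unfolding weight_bounded_def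
proof (intro allI impI)
  fix m' assume "total_deriv_coeffs reactions k p m' \<noteq> 0"
  then obtain m i r where t: "(m, i, r) \<in> contributions reactions p m'"
    by (auto dest!: contributions_nonempty)
  then have "r \<in> reactions" "m' = cplus (cdec m i) (fst r)" by (auto simp: contributions_def)
  then have "1 \<le> sdeg m'" by (simp add: sdeg_cplus sdeg_reactant)
  moreover have "wdeg m' \<le> Suc l \<and> (wdeg m' = Suc l \<longrightarrow> m' = lead_monom (Suc l))" if "sdeg m' = 1"
    using contribution_wdeg_step[OF p l t that] lead_monom_Suc[OF l] \<open>m' = _\<close> by blast
  ultimately show "1 \<le> sdeg m' \<and> (sdeg m' = 1 \<longrightarrow>
      wdeg m' \<le> Suc l \<and> (wdeg m' = Suc l \<longrightarrow> m' = lead_monom (Suc l)))"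
    by blast
qed

lemma contributions_lead_monom_Suc:
  assumes p: "weight_bounded l p" and l: "l < 2 * L" and lead: "p (lead_monom l) \<noteq> 0"
  shows "contributions reactions p (lead_monom (Suc l)) = {(lead_monom l, lead_species l, lead_reaction l)}"
proof (intro equalityI subsetI)
  fix t assume t: "t \<in> contributions reactions p (lead_monom (Suc l))"
  obtain m i r where "t = (m, i, r)" by (cases t)
  then show "t \<in> {(lead_monom l, lead_species l, lead_reaction l)}"
    using contribution_wdeg_step[OF p l] t l sdeg_lead_monom[of "Suc l"] wdeg_lead_monom[of "Suc l"] by auto
next
  fix t assume "t \<in> {(lead_monom l, lead_species l, lead_reaction l)}"
  then show "t \<in> contributions reactions p (lead_monom (Suc l))"
    using lead l lead_reaction_mem[OF l] net_change_lead_reaction[OF l] lead_monom_Suc[OF l]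
      lead_monom_lead_species[of l]
    by (simp add: contributions_def)
qed

abbreviation sL_coeffs :: "('sp reaction \<Rightarrow> real) \<Rightarrow> nat \<Rightarrow> 'sp cplx \<Rightarrow> real" where
  "sL_coeffs k l \<equiv> (total_deriv_coeffs reactions k ^^ l) (var_coeffs (S L))"

lemma lead_monom_0: "lead_monom 0 = cunit (S L)"
  by (simp add: lead_monom_def lead_species_def enzyme_pow_def cplus_zero_left)

lemma sL_coeffs_lead:
  assumes k: "\<forall>r\<in>reactions. 0 < k r"
  shows "l \<le> 2 * L \<Longrightarrow> weight_bounded l (sL_coeffs k l) \<and> sL_coeffs k l (lead_monom l) = lead_coeff k l"
proof (induction l)
  case 0
  have "sdeg (cunit (S L)) = 1" "wdeg (cunit (S L)) = 0" by (simp_all add: sdeg_cunit wdeg_cunit)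
  then show ?case by (auto simp: weight_bounded_def var_coeffs_def lead_coeff_def lead_monom_0)
next
  case (Suc l)
  then have l: "l < 2 * L" and IH: "weight_bounded l (sL_coeffs k l)" "sL_coeffs k l (lead_monom l) = lead_coeff k l"
    by auto
  have lead: "sL_coeffs k l (lead_monom l) \<noteq> 0"
    using IH(2) lead_coeff_pos[OF k, of l] l by force
  have "sL_coeffs k (Suc l) (lead_monom (Suc l)) =
      contribution k (sL_coeffs k l) (lead_monom l, lead_species l, lead_reaction l)"
    by (simp add: total_deriv_coeffs_def contributions_lead_monom_Suc[OF IH(1) l lead])
  also have "\<dots> = lead_coeff k (Suc l)"
    using IH(2) lead_monom_lead_species[of l] net_change_lead_reaction[OF l] l
    by (simp add: contribution_def lead_coeff_def)
  finally show ?case using weight_bounded_total_deriv_coeffs[OF IH(1) l] by simp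
qed

lemma lead_monom_1: "lead_monom 1 = cunit (U L)"
  and lead_monom_2: "lead_monom 2 = cplus (cunit Y) (cunit (S (L - 1)))"
  by (simp_all add: lead_monom_def lead_species_def enzyme_pow_def cplus_def cunit_def fun_eq_iff)

lemma lead_coeff_1: "lead_coeff k 1 = k (rc L)"
  and lead_coeff_2: "lead_coeff k 2 = k (rc L) * k (ra L)"
  by (simp_all add: lead_coeff_def lead_reaction_def numeral_2_eq_2)

lemma rb_ne_rc: "j \<in> {1..L} \<Longrightarrow> rb j \<noteq> rc j"
proof
  assume j: "j \<in> {1..L}" and "rb j = rc j"
  then have "snd (rb j) (S j) = snd (rc j) (S j)" by simp
  moreover have "S j \<noteq> S (j - 1)" using j by (subst S_eq_iff) auto
  ultimately show False using j by (simp add: rB_def rC_def cplus_def cunit_def)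
qed

lemma reactant_eq_cunit_U:
  assumes r: "r \<in> reactions" and j: "j \<in> {1..L}" and fst_r: "fst r = cunit (U j)"
  shows "r = rb j \<or> r = rc j"
proof -
  from r obtain j' where j': "j' \<in> {1..L}" "r = ra j' \<or> r = rb j' \<or> r = rc j'"
    unfolding mem_chain_reactions by blast
  have "r \<noteq> ra j'"
  proof
    assume "r = ra j'"
    then have "fst r Y = 1" using j' by (simp add: fst_rA cplus_def cunit_def)
    then show False using fst_r j by (simp add: cunit_def)
  qed
  then have "r = rb j' \<or> r = rc j'" and "cunit (U j') = cunit (U j)"
    using j' fst_r by (auto simp: fst_rB fst_rC)
  then show ?thesis using j j' by (simp add: cunit_eq_iff)
qed

lemma reactant_eq_Y_S0:
  assumes r: "r \<in> reactions" and fst_r: "fst r = cplus (cunit Y) (cunit (S 0))"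
  shows "r = ra 1"
proof -
  from r obtain j' where j': "j' \<in> {1..L}" "r = ra j' \<or> r = rb j' \<or> r = rc j'"
    unfolding mem_chain_reactions by blast
  have "fst r Y = 1" using fst_r by (simp add: cplus_def cunit_def)
  moreover have "fst (rb j') Y = 0" "fst (rc j') Y = 0" using j' by (simp_all add: fst_rB fst_rC cunit_def)
  ultimately have r: "r = ra j'" using j' by auto
  then have "S (j' - 1) = S 0" using fst_r by (simp add: fst_rA cplus_left_cancel cunit_eq_iff)
  then have "j' = 1" using j' by (subst (asm) S_eq_iff) auto
  then show ?thesis using r by simp
qed

lemma sL_coeffs_1_nonzero: "sL_coeffs k 1 m \<noteq> 0 \<Longrightarrow> m = cunit (U L)"
proof -
  assume "sL_coeffs k 1 m \<noteq> 0"
  then obtain m0 i r where "(m0, i, r) \<in> contributions reactions (var_coeffs (S L)) m"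
    by (auto dest!: contributions_nonempty)
  then have "var_coeffs (S L) m0 \<noteq> 0" "0 < m0 i" "r \<in> reactions" "net_change r i \<noteq> 0"
    "m = cplus (cdec m0 i) (fst r)"
    by (auto simp: contributions_def)
  then have "m0 = cunit (S L)" "i = S L" "r = rc L"
    by (auto simp: var_coeffs_def cunit_pos_iff split: if_splits dest: net_change_S_L)
  then show "m = cunit (U L)" using \<open>m = _\<close> by (simp add: cdec_cunit cplus_zero_left fst_rC)
qed

lemma contributions_sL_coeffs_1E:
  assumes "t \<in> contributions reactions (sL_coeffs k 1) m'"
  obtains r where "t = (cunit (U L), U L, r)" "r \<in> reactions" "net_change r (U L) \<noteq> 0" "m' = fst r"
  using assms
proof (rule contributionsE)
  fix m i r assume t: "t = (m, i, r)" and m: "sL_coeffs k 1 m \<noteq> 0" and mi: "0 < m i"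
    and "r \<in> reactions" "net_change r i \<noteq> 0" "m' = cplus (cdec m i) (fst r)"
  moreover have "m = cunit (U L)" using m by (rule sL_coeffs_1_nonzero)
  moreover from this have "i = U L" using mi by (simp add: cunit_pos_iff)
  ultimately show thesis using that by (simp add: cdec_cunit cplus_zero_left)
qed

lemma sL_coeffs_2_nonzero: "sL_coeffs k 2 m \<noteq> 0 \<Longrightarrow> m = lead_monom 2 \<or> m = cunit (U L)"
proof -
  assume "sL_coeffs k 2 m \<noteq> 0"
  then have "total_deriv_coeffs reactions k (sL_coeffs k 1) m \<noteq> 0" by (simp add: numeral_2_eq_2)
  then obtain t where "t \<in> contributions reactions (sL_coeffs k 1) m"
    by (auto dest!: contributions_nonempty)
  then obtain r where "r \<in> reactions" "net_change r (U L) \<noteq> 0" "m = fst r"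
    by (rule contributions_sL_coeffs_1E)
  then show ?thesis
    using net_change_U[of r L] L_pos by (auto simp: fst_rA fst_rB fst_rC lead_monom_2)
qed

lemma contributions_sL_coeffs_2E:
  assumes "t \<in> contributions reactions (sL_coeffs k 2) m'"
  obtains (from_U) r where "t = (cunit (U L), U L, r)" "r \<in> reactions" "m' = fst r"
  | (from_Y) r where "t = (lead_monom 2, Y, r)" "r \<in> reactions" "net_change r Y \<noteq> 0"
      "m' = cplus (cunit (S (L - 1))) (fst r)"
  | (from_S) r where "t = (lead_monom 2, S (L - 1), r)" "r \<in> reactions" "m' = cplus (cunit Y) (fst r)"
  using assms
proof (rule contributionsE)
  fix m i r assume t: "t = (m, i, r)" and m: "sL_coeffs k 2 m \<noteq> 0" and mi: "0 < m i"
    and r: "r \<in> reactions" and d: "net_change r i \<noteq> 0" and m': "m' = cplus (cdec m i) (fst r)"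
  have SY: "S (L - 1) \<noteq> Y" by simp
  from sL_coeffs_2_nonzero[OF m] show thesis
  proof
    assume m2: "m = lead_monom 2"
    then have "i = Y \<or> i = S (L - 1)" using mi by (auto simp: lead_monom_2 cplus_def cunit_def split: if_splits)
    then show thesis
    proof
      assume "i = Y"
      then show thesis using from_Y t m2 r d m' by (simp add: lead_monom_2 cdec_cplus_cunit_left)
    next
      assume "i = S (L - 1)"
      moreover have "cdec (lead_monom 2) (S (L - 1)) = cunit Y"
        using cdec_cplus_cunit_left[of "S (L - 1)" "cunit Y"] by (simp add: lead_monom_2 cplus_commute)
      ultimately show thesis using from_S t m2 r m' by simp
    qed
  next
    assume "m = cunit (U L)"
    moreover from this have "i = U L" using mi by (simp add: cunit_pos_iff)
    ultimately show thesis using from_U t r m' by (simp add: cdec_cunit cplus_zero_left)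
  qed
qed

lemma sL_coeffs_2_U:
  assumes k: "\<forall>r\<in>reactions. 0 < k r"
  shows "sL_coeffs k 2 (cunit (U L)) = - (k (rc L) * (k (rb L) + k (rc L)))"
proof -
  have L: "L \<in> {1..L}" using L_pos by simp
  have c1: "sL_coeffs k 1 (cunit (U L)) = k (rc L)"
    using sL_coeffs_lead[OF k, of 1] L_pos unfolding lead_monom_1 lead_coeff_1 by simp
  have mem: "rb L \<in> reactions" "rc L \<in> reactions" using L by (auto simp: mem_chain_reactions)
  have d: "net_change (rb L) (U L) = -1" "net_change (rc L) (U L) = -1"
    using L by (simp_all add: net_change_rB net_change_rC)
  have "contributions reactions (sL_coeffs k 1) (cunit (U L)) =
      {(cunit (U L), U L, rb L), (cunit (U L), U L, rc L)}"
  proof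
    show "contributions reactions (sL_coeffs k 1) (cunit (U L)) \<subseteq>
        {(cunit (U L), U L, rb L), (cunit (U L), U L, rc L)}"
    proof
      fix t assume "t \<in> contributions reactions (sL_coeffs k 1) (cunit (U L))"
      then obtain r where t: "t = (cunit (U L), U L, r)" "r \<in> reactions" "cunit (U L) = fst r"
        by (rule contributions_sL_coeffs_1E)
      then have "r = rb L \<or> r = rc L" using reactant_eq_cunit_U[OF _ L] by metis
      then show "t \<in> {(cunit (U L), U L, rb L), (cunit (U L), U L, rc L)}" using t by blast
    qed
    have "sL_coeffs k 1 (cunit (U L)) \<noteq> 0" using c1 k mem by force
    then show "{(cunit (U L), U L, rb L), (cunit (U L), U L, rc L)} \<subseteq>
        contributions reactions (sL_coeffs k 1) (cunit (U L))"
      unfolding contributions_def using mem d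
      by (simp add: cunit_pos_iff cdec_cunit cplus_zero_left fst_rB fst_rC)
  qed
  then have "sL_coeffs k 2 (cunit (U L)) =
      contribution k (sL_coeffs k 1) (cunit (U L), U L, rb L) + contribution k (sL_coeffs k 1) (cunit (U L), U L, rc L)"
    using rb_ne_rc[OF L] by (simp add: total_deriv_coeffs_def numeral_2_eq_2)
  then show ?thesis using c1 d by (simp add: contribution_def cunit_def algebra_simps)
qed

lemma sL_coeffs_3: "sL_coeffs k 3 = total_deriv_coeffs reactions k (sL_coeffs k 2)"
  by (simp add: numeral_3_eq_3 numeral_2_eq_2)

lemma sL_coeffs_2_lead:
  assumes k: "\<forall>r\<in>reactions. 0 < k r"
  shows "sL_coeffs k 2 (lead_monom 2) = k (rc L) * k (ra L)" "sL_coeffs k 2 (lead_monom 2) \<noteq> 0"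
proof -
  show c2: "sL_coeffs k 2 (lead_monom 2) = k (rc L) * k (ra L)"
    using sL_coeffs_lead[OF k, of 2] L_pos unfolding lead_coeff_2 by simp
  have "ra L \<in> reactions" "rc L \<in> reactions" using L_pos by (auto simp: mem_chain_reactions)
  then show "sL_coeffs k 2 (lead_monom 2) \<noteq> 0" using c2 k by force
qed

lemma sL_coeffs_3_S_U:
  assumes k: "\<forall>r\<in>reactions. 0 < k r" and j: "j \<in> {1..L}"
  shows "sL_coeffs k 3 (cplus (cunit (S (L - 1))) (cunit (U j))) = k (rc L) * k (ra L) * (k (rb j) + k (rc j))"
proof -
  let ?m = "cplus (cunit (S (L - 1))) (cunit (U j))"
  have mem: "rb j \<in> reactions" "rc j \<in> reactions" using j by (auto simp: mem_chain_reactions)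
  have d: "net_change (rb j) Y = 1" "net_change (rc j) Y = 1"
    using j by (simp_all add: net_change_rB net_change_rC)
  have mY: "?m Y = 0" and sm: "sdeg ?m = 2" using j by (simp_all add: cplus_apply cunit_apply sdeg_cplus sdeg_cunit)
  have "contributions reactions (sL_coeffs k 2) ?m = {(lead_monom 2, Y, rb j), (lead_monom 2, Y, rc j)}"
  proof
    show "contributions reactions (sL_coeffs k 2) ?m \<subseteq> {(lead_monom 2, Y, rb j), (lead_monom 2, Y, rc j)}"
    proof
      fix t assume "t \<in> contributions reactions (sL_coeffs k 2) ?m"
      then show "t \<in> {(lead_monom 2, Y, rb j), (lead_monom 2, Y, rc j)}"
      proof (cases rule: contributions_sL_coeffs_2E)
        case (from_U r)
        then show ?thesis using sm sdeg_reactant[of r] by simp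
      next
        case (from_Y r)
        then have "fst r = cunit (U j)" by (simp add: cplus_left_cancel)
        then show ?thesis using from_Y reactant_eq_cunit_U[OF _ j] by blast
      next
        case (from_S r)
        then show ?thesis using mY by (simp add: cplus_apply cunit_apply)
      qed
    qed
    show "{(lead_monom 2, Y, rb j), (lead_monom 2, Y, rc j)} \<subseteq> contributions reactions (sL_coeffs k 2) ?m"
      unfolding contributions_def using sL_coeffs_2_lead(2)[OF k] mem d
      by (simp add: lead_monom_2 cdec_cplus_cunit_left fst_rB fst_rC cplus_apply cunit_apply)
  qed
  then have "sL_coeffs k 3 ?m =
      contribution k (sL_coeffs k 2) (lead_monom 2, Y, rb j) + contribution k (sL_coeffs k 2) (lead_monom 2, Y, rc j)"
    using rb_ne_rc[OF j] unfolding sL_coeffs_3 total_deriv_coeffs_def by simp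
  then show ?thesis
    using sL_coeffs_2_lead(1)[OF k] d by (simp add: contribution_def lead_monom_2 cplus_apply cunit_apply algebra_simps)
qed

lemma sL_coeffs_3_S_Y_S:
  assumes k: "\<forall>r\<in>reactions. 0 < k r"
  shows "sL_coeffs k 3 (cplus (cunit (S (L - 1))) (cplus (cunit Y) (cunit (S 0)))) = - (k (rc L) * k (ra L) * k (ra 1))"
proof -
  let ?m = "cplus (cunit (S (L - 1))) (cplus (cunit Y) (cunit (S 0)))"
  have mem: "ra 1 \<in> reactions" using L_pos by (auto simp: mem_chain_reactions)
  have d: "net_change (ra 1) Y = -1" using L_pos by (simp add: net_change_rA)
  have sm: "sdeg ?m = 2" by (simp add: sdeg_cplus sdeg_cunit)
  have "contributions reactions (sL_coeffs k 2) ?m = {(lead_monom 2, Y, ra 1)}"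
  proof
    show "contributions reactions (sL_coeffs k 2) ?m \<subseteq> {(lead_monom 2, Y, ra 1)}"
    proof
      fix t assume "t \<in> contributions reactions (sL_coeffs k 2) ?m"
      then show "t \<in> {(lead_monom 2, Y, ra 1)}"
      proof (cases rule: contributions_sL_coeffs_2E)
        case (from_U r)
        then show ?thesis using sm sdeg_reactant[of r] by simp
      next
        case (from_Y r)
        then have "fst r = cplus (cunit Y) (cunit (S 0))" by (simp add: cplus_left_cancel)
        then show ?thesis using from_Y reactant_eq_Y_S0 by blast
      next
        case (from_S r)
        then have "cplus (cunit Y) (cplus (cunit (S (L - 1))) (cunit (S 0))) = cplus (cunit Y) (fst r)"
          by (metis cplus_assoc cplus_commute)
        then have "fst r = cplus (cunit (S (L - 1))) (cunit (S 0))" by (simp add: cplus_left_cancel)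
        then have "sdeg (fst r) = 2" by (simp add: sdeg_cplus sdeg_cunit)
        then show ?thesis using from_S sdeg_reactant[of r] by simp
      qed
    qed
    show "{(lead_monom 2, Y, ra 1)} \<subseteq> contributions reactions (sL_coeffs k 2) ?m"
      unfolding contributions_def using sL_coeffs_2_lead(2)[OF k] mem d
      by (simp add: lead_monom_2 cdec_cplus_cunit_left fst_rA cplus_apply cunit_apply)
  qed
  then have "sL_coeffs k 3 ?m = contribution k (sL_coeffs k 2) (lead_monom 2, Y, ra 1)"
    unfolding sL_coeffs_3 total_deriv_coeffs_def by simp
  then show ?thesis
    using sL_coeffs_2_lead(1)[OF k] d by (simp add: contribution_def lead_monom_2 cplus_apply cunit_apply)
qed

lemma supported_on_lead_monom: "l \<le> 2 * L \<Longrightarrow> supported_on species (lead_monom l)"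
  unfolding lead_monom_def
proof (intro supported_on_cplus supported_on_cunit)
  show "supported_on species (enzyme_pow (l div 2))"
    by (simp add: supported_on_def enzyme_pow_def chain_species_def)
  show "l \<le> 2 * L \<Longrightarrow> lead_species l \<in> species"
    by (cases l rule: parity_cases) (auto simp: lead_species_def chain_species_def)
qed

abbreviation max_order :: nat where
  "max_order \<equiv> max 2 (2 * L - 1)"

lemma max_order_eq: "max_order = (if L = 1 then 2 else 2 * L - 1)"
  using L_pos by (auto simp: max_def)

context
  fixes k1 k2 :: "'sp reaction \<Rightarrow> real"
  assumes k1_pos: "\<forall>r\<in>reactions. 0 < k1 r" and k2_pos: "\<forall>r\<in>reactions. 0 < k2 r"
    and obs: "\<And>l m. l \<in> {1..max_order} \<Longrightarrow> supported_on species m \<Longrightarrow> sL_coeffs k1 l m = sL_coeffs k2 l m"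
begin

lemma lead_coeff_identified: "l \<le> max_order \<Longrightarrow> lead_coeff k1 l = lead_coeff k2 l"
proof (cases "l = 0")
  case False
  assume l: "l \<le> max_order"
  then have "l \<le> 2 * L" using L_pos by simp
  then show ?thesis
    using obs[of l "lead_monom l"] False l supported_on_lead_monom sL_coeffs_lead[OF k1_pos] sL_coeffs_lead[OF k2_pos]
    by simp
qed (simp add: lead_coeff_def)

lemma lead_reaction_identified:
  assumes "Suc l \<le> max_order"
  shows "k1 (lead_reaction l) = k2 (lead_reaction l)"
proof -
  have "lead_coeff k1 l * k1 (lead_reaction l) = lead_coeff k2 l * k2 (lead_reaction l)"
    using lead_coeff_identified[OF assms] by (simp add: lead_coeff_def)
  moreover have "l \<le> 2 * L" using assms L_pos by (auto simp: max_order_eq split: if_splits)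
  then have "lead_coeff k1 l = lead_coeff k2 l" "lead_coeff k1 l \<noteq> 0"
    using lead_coeff_identified[of l] lead_coeff_pos[OF k1_pos, of l] assms by auto
  ultimately show ?thesis by simp
qed

lemma rc_identified:
  assumes j: "j \<in> {1..L}"
  shows "k1 (rc j) = k2 (rc j)"
proof -
  have "Suc (2 * (L - j)) \<le> max_order" using j by (auto simp: max_order_eq)
  then show ?thesis using lead_reaction_identified j by (fastforce simp: lead_reaction_def)
qed

lemma rc_ra_L_nonzero: "k1 (rc L) * k1 (ra L) \<noteq> 0"
  using k1_pos chain_reactions_memI[OF L_mem] by force

lemma ra_L_identified: "k1 (ra L) = k2 (ra L)"
  using lead_reaction_identified[of 1] by (simp add: lead_reaction_def)

lemma ra_identified:
  assumes j: "j \<in> {1..L}"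
  shows "k1 (ra j) = k2 (ra j)"
proof (cases "2 * (L - j) + 2 \<le> max_order")
  case True
  then show ?thesis using lead_reaction_identified[of "2 * (L - j) + 1"] j by (simp add: lead_reaction_def)
next
  text \<open>Only \<open>ra 1\<close> for \<open>L \<ge> 2\<close> lies beyond the leading coefficients.\<close>
  case False
  then have j1: "j = 1" and "3 \<le> max_order" using j unfolding max_order_eq by (auto split: if_splits)
  then have "sL_coeffs k1 3 (cplus (cunit (S (L - 1))) (cplus (cunit Y) (cunit (S 0)))) =
      sL_coeffs k2 3 (cplus (cunit (S (L - 1))) (cplus (cunit Y) (cunit (S 0))))"
    by (intro obs) (auto intro!: supported_on_cplus supported_on_cunit simp: chain_species_def)
  then have "k1 (rc L) * k1 (ra L) * k1 (ra 1) = k2 (rc L) * k2 (ra L) * k2 (ra 1)"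
    using sL_coeffs_3_S_Y_S[OF k1_pos] sL_coeffs_3_S_Y_S[OF k2_pos] by simp
  then show ?thesis using rc_ra_L_nonzero ra_L_identified rc_identified[OF L_mem] j1 by simp
qed

lemma rb_identified:
  assumes j: "j \<in> {1..L}"
  shows "k1 (rb j) = k2 (rb j)"
proof (cases "L = 1")
  case True
  then have "sL_coeffs k1 2 (cunit (U L)) = sL_coeffs k2 2 (cunit (U L))"
    by (intro obs) (auto intro!: supported_on_cunit simp: chain_species_def)
  then have "k1 (rc L) * (k1 (rb L) + k1 (rc L)) = k2 (rc L) * (k2 (rb L) + k2 (rc L))"
    using sL_coeffs_2_U[OF k1_pos] sL_coeffs_2_U[OF k2_pos] by simp
  then show ?thesis using rc_ra_L_nonzero rc_identified[OF L_mem] True j by simp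
next
  case False
  then have "sL_coeffs k1 3 (cplus (cunit (S (L - 1))) (cunit (U j))) =
      sL_coeffs k2 3 (cplus (cunit (S (L - 1))) (cunit (U j)))"
    using j L_pos by (intro obs) (auto intro!: supported_on_cplus supported_on_cunit simp: chain_species_def)
  then have "k1 (rc L) * k1 (ra L) * (k1 (rb j) + k1 (rc j)) = k2 (rc L) * k2 (ra L) * (k2 (rb j) + k2 (rc j))"
    using sL_coeffs_3_S_U[OF k1_pos j] sL_coeffs_3_S_U[OF k2_pos j] by simp
  then show ?thesis using rc_ra_L_nonzero ra_L_identified rc_identified[OF L_mem] rc_identified[OF j] by simp
qed

theorem rate_constants_identified:
  "map (\<lambda>j. (k1 (ra j), k1 (rb j), k1 (rc j))) [1..<L + 1] =
   map (\<lambda>j. (k2 (ra j), k2 (rb j), k2 (rc j))) [1..<L + 1]"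
  using ra_identified rb_identified rc_identified by (intro map_cong) auto

end

end

section \<open>The hypotheses (H1) and (H2)\<close>

lemma H1D:
  fixes R :: "('sp::finite) reaction set"
  assumes "H1 R I L Y S U"
  shows H1_reactions: "R = (\<Union>c\<in>I. chain_reactions (Y c) (S c) (U c) (L c))"
    and H1_finite_index: "finite I"
    and H1_length_pos: "\<forall>c\<in>I. L c \<ge> 1"
    and H1_inj_intermediates: "inj_on (\<lambda>(c, j). U c j) {(c, j). c \<in> I \<and> j \<in> {1..L c}}"
    and H1_intermediate_ne:
      "\<forall>c\<in>I. \<forall>j\<in>{1..L c}. \<forall>c'\<in>I. U c j \<noteq> Y c' \<and> (\<forall>j'\<in>{0..L c'}. U c j \<noteq> S c' j')"
    and H1_inj_substrates: "\<forall>c\<in>I. inj_on (S c) {0..L c}"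
    and H1_complexes_distinct: "\<forall>c\<in>I. \<forall>c'\<in>I. c \<noteq> c' \<longrightarrow> (\<forall>j\<in>{0..L c}. \<forall>j'\<in>{0..L c'}.
        cplus (cunit (Y c)) (cunit (S c j)) \<noteq> cplus (cunit (Y c')) (cunit (S c' j')))"
  using assms unfolding H1_def by - (elim conjE; assumption)+

lemma H2_classes:
  fixes R :: "('sp::finite) reaction set"
  assumes "H2 R I L Y S U"
  obtains P :: "'sp \<Rightarrow> nat" where "\<And>c j. c \<in> I \<Longrightarrow> j \<le> L c \<Longrightarrow> P (Y c) \<noteq> P (S c j)"
    and "\<And>c i j. c \<in> I \<Longrightarrow> i \<le> L c \<Longrightarrow> j \<le> L c \<Longrightarrow> P (S c i) = P (S c j)"
proof -
  obtain P :: "'sp \<Rightarrow> nat" where P: "\<forall>c\<in>I. \<exists>\<alpha>\<ge>1. (\<forall>j\<in>{0..L c}. P (S c j) = \<alpha>) \<and> P (Y c) \<noteq> \<alpha>"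
    using assms unfolding H2_def by (elim exE conjE) fast
  have P_class: "\<exists>\<alpha>. (\<forall>j\<in>{0..L c}. P (S c j) = \<alpha>) \<and> P (Y c) \<noteq> \<alpha>" if "c \<in> I" for c
    using P that by blast
  show thesis
  proof (rule that)
    show "P (Y c) \<noteq> P (S c j)" if "c \<in> I" "j \<le> L c" for c j
      using P_class[OF that(1)] that(2) by auto
    show "P (S c i) = P (S c j)" if "c \<in> I" "i \<le> L c" "j \<le> L c" for c i j
      using P_class[OF that(1)] that(2,3) by auto
  qed
qed

lemma H1_H2_enzyme_chain:
  fixes R :: "('sp::finite) reaction set"
  assumes H1: "H1 R I L Y S U" and H2: "H2 R I L Y S U" and c: "c \<in> I"
  shows "enzyme_chain (Y c) (S c) (U c) (L c)"
proof
  obtain P :: "'sp \<Rightarrow> nat" where "\<And>j. j \<le> L c \<Longrightarrow> P (Y c) \<noteq> P (S c j)"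
    using H2_classes[OF H2] c by metis
  then show "S c j \<noteq> Y c" if "j \<le> L c" for j using that by metis
  show "inj_on (U c) {1..L c}"
    using H1_inj_intermediates[OF H1] c by (auto simp: inj_on_def)
  show "1 \<le> L c" using H1_length_pos[OF H1] c by blast
  show "inj_on (S c) {0..L c}" using H1_inj_substrates[OF H1] c by blast
  show "U c j \<noteq> Y c" if "1 \<le> j" "j \<le> L c" for j
    using H1_intermediate_ne[OF H1] c that by auto
  show "U c j' \<noteq> S c j" if "j \<le> L c" "1 \<le> j'" "j' \<le> L c" for j j'
    using H1_intermediate_ne[OF H1] c that by auto
qed

lemma H1_intermediate_not_chain_species:
  fixes R :: "('sp::finite) reaction set"
  assumes H1: "H1 R I L Y S U" and c: "c \<in> I" "c0 \<in> I" "c \<noteq> c0" and j: "j \<in> {1..L c}"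
  shows "U c j \<notin> chain_species (Y c0) (S c0) (U c0) (L c0)"
proof -
  have "U c j \<noteq> Y c0" "U c j \<notin> S c0 ` {0..L c0}" using H1_intermediate_ne[OF H1] c j by auto
  moreover have "U c j \<notin> U c0 ` {1..L c0}"
  proof
    assume "U c j \<in> U c0 ` {1..L c0}"
    then obtain b where "b \<in> {1..L c0}" "U c j = U c0 b" by blast
    then have "(c, j) = (c0, b)" using inj_onD[OF H1_inj_intermediates[OF H1]] c j by fastforce
    then show False using c by simp
  qed
  ultimately show ?thesis by (simp add: chain_species_def)
qed

text \<open>Here (H2) is used: the enzyme and a substrate of the same component lie in different classes,
  while all substrates of a component lie in the same class.\<close>
lemma H1_H2_reactant_pair_not_chain_species:
  fixes R :: "('sp::finite) reaction set"
  assumes H1: "H1 R I L Y S U" and H2: "H2 R I L Y S U"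
    and c: "c \<in> I" "c0 \<in> I" "c \<noteq> c0" and j: "j \<le> L c"
  shows "Y c \<notin> chain_species (Y c0) (S c0) (U c0) (L c0) \<or>
    S c j \<notin> chain_species (Y c0) (S c0) (U c0) (L c0)"
proof (rule ccontr)
  let ?V = "chain_species (Y c0) (S c0) (U c0) (L c0)"
  assume "\<not> ?thesis"
  then have in_V: "Y c \<in> ?V" "S c j \<in> ?V" by auto
  obtain P :: "'sp \<Rightarrow> nat" where P_enzyme: "\<And>c j. c \<in> I \<Longrightarrow> j \<le> L c \<Longrightarrow> P (Y c) \<noteq> P (S c j)"
    and P_substrates: "\<And>c i j. c \<in> I \<Longrightarrow> i \<le> L c \<Longrightarrow> j \<le> L c \<Longrightarrow> P (S c i) = P (S c j)"
    using H2_classes[OF H2] by blast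
  have "U c0 b \<noteq> Y c \<and> U c0 b \<noteq> S c j" if "b \<in> {1..L c0}" for b
    using H1_intermediate_ne[OF H1] c j that by simp
  then have "Y c \<notin> U c0 ` {1..L c0}" "S c j \<notin> U c0 ` {1..L c0}" by (metis imageE)+
  moreover have "x = Y c0 \<or> (\<exists>a\<le>L c0. x = S c0 a)" if "x \<in> ?V" "x \<notin> U c0 ` {1..L c0}" for x
    using that by (auto simp: chain_species_def)
  ultimately have "Y c = Y c0 \<or> (\<exists>a\<le>L c0. Y c = S c0 a)" "S c j = Y c0 \<or> (\<exists>b\<le>L c0. S c j = S c0 b)"
    using in_V by blast+
  moreover have "cplus (cunit (Y c)) (cunit (S c j)) \<noteq> cplus (cunit (Y c0)) (cunit (S c0 a))"
    if "a \<le> L c0" for a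
    using H1_complexes_distinct[OF H1] c j that by auto
  ultimately show False
    using P_enzyme[OF c(1) j] P_enzyme[OF c(2)] P_substrates[OF c(2)] cplus_commute
    by metis
qed

lemma H1_H2_foreign_reactant:
  fixes R :: "('sp::finite) reaction set"
  assumes H1: "H1 R I L Y S U" and H2: "H2 R I L Y S U" and c0: "c0 \<in> I"
    and r: "r \<in> R - chain_reactions (Y c0) (S c0) (U c0) (L c0)"
  shows "\<exists>x. 0 < fst r x \<and> x \<notin> chain_species (Y c0) (S c0) (U c0) (L c0)"
proof -
  obtain c where c: "c \<in> I" "r \<in> chain_reactions (Y c) (S c) (U c) (L c)"
    using H1_reactions[OF H1] r by blast
  with r have "c \<noteq> c0" by blast
  from c(2) obtain j where j: "j \<in> {1..L c}"
    and "r = rA (Y c) (S c) (U c) j \<or> r = rB (Y c) (S c) (U c) j \<or> r = rC (Y c) (S c) (U c) j"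
    unfolding mem_chain_reactions by blast
  then consider "r = rA (Y c) (S c) (U c) j" | "fst r = cunit (U c j)" by (auto simp: fst_rB fst_rC)
  then show ?thesis
  proof cases
    case 1
    then have "0 < fst r (Y c)" "0 < fst r (S c (j - 1))" by (simp_all add: fst_rA cplus_def cunit_def)
    moreover have "j - 1 \<le> L c" using j by auto
    ultimately show ?thesis
      using H1_H2_reactant_pair_not_chain_species[OF H1 H2 c(1) c0 \<open>c \<noteq> c0\<close>, of "j - 1"] by blast
  next
    case 2
    then show ?thesis
      using H1_intermediate_not_chain_species[OF H1 c(1) c0 \<open>c \<noteq> c0\<close> j] by (auto simp: cunit_def)
  qed
qed

lemma H1_H2_restrict_to_component:
  fixes R :: "('sp::finite) reaction set"
  assumes "H1 R I L Y S U" and "H2 R I L Y S U" and "c0 \<in> I"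
    and "supported_on (chain_species (Y c0) (S c0) (U c0) (L c0)) m"
  shows "(total_deriv_coeffs R k ^^ l) p m =
    (total_deriv_coeffs (chain_reactions (Y c0) (S c0) (U c0) (L c0)) k ^^ l) p m"
proof -
  interpret enzyme_chain "Y c0" "S c0" "U c0" "L c0"
    by (rule H1_H2_enzyme_chain[OF assms(1-3)])
  have "reactions \<subseteq> R" using H1_reactions[OF assms(1)] assms(3) by blast
  then show ?thesis
    by (rule funpow_total_deriv_coeffs_restrict[OF _ H1_H2_foreign_reactant[OF assms(1-3)]
          net_change_species assms(4)])
qed

theorem mainTheorem1:
  fixes R :: "('sp::finite) reaction set"
    and I :: "'c set" and L :: "'c \<Rightarrow> nat" and Y :: "'c \<Rightarrow> 'sp"
    and S U :: "'c \<Rightarrow> nat \<Rightarrow> 'sp" and c0 :: 'c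
  assumes "H1 R I L Y S U"
    and "H2 R I L Y S U"
    and "c0 \<in> I"
  shows "identifiable R
           (\<lambda>k. map (\<lambda>j. (k (rA (Y c0) (S c0) (U c0) j),
                          k (rB (Y c0) (S c0) (U c0) j),
                          k (rC (Y c0) (S c0) (U c0) j))) [1..<L c0 + 1])
           {S c0 (L c0)}
           (max 2 (2 * L c0 - 1))"
proof -
  interpret enzyme_chain "Y c0" "S c0" "U c0" "L c0"
    by (rule H1_H2_enzyme_chain[OF assms])
  have "finite R" and sub: "reactions \<subseteq> R"
    using H1_reactions[OF assms(1)] H1_finite_index[OF assms(1)] assms(3) by (auto simp: finite_chain_reactions)
  show ?thesis
    unfolding identifiable_def
  proof (intro allI impI, elim conjE)
    fix k1 k2 :: "'sp reaction \<Rightarrow> real"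
    assume k1: "\<forall>r\<in>R. 0 < k1 r" and k2: "\<forall>r\<in>R. 0 < k2 r"
      and obs: "\<forall>l\<in>{1..max_order}. \<forall>i\<in>{S c0 (L c0)}.
        total_deriv_iter R k1 l (\<lambda>x. x $ i) = total_deriv_iter R k2 l (\<lambda>x. x $ i)"
    have "sL_coeffs k1 l m = sL_coeffs k2 l m" if "l \<in> {1..max_order}" "supported_on species m" for l m
      using total_deriv_iter_eq_imp_coeffs_eq[OF \<open>finite R\<close>] obs that(1)
        H1_H2_restrict_to_component[OF assms that(2)] by (metis singletonI)
    moreover have "\<forall>r\<in>reactions. 0 < k1 r" "\<forall>r\<in>reactions. 0 < k2 r" using k1 k2 sub by blast+
    ultimately show "map (\<lambda>j. (k1 (ra j), k1 (rb j), k1 (rc j))) [1..<L c0 + 1] =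
        map (\<lambda>j. (k2 (ra j), k2 (rb j), k2 (rc j))) [1..<L c0 + 1]"
      by (intro rate_constants_identified)
  qed
qed

end
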